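(* Let $G=(V,E)$ be a directed multigraph with arc costs $c\in\mathbb{R}^E$ and gains $\gamma\in\mathbb{R}^E_{>0}$, and $u\in V$. Let $\mathcal{D}:=\{x\in\mathbb{R}^E_{\ge0}: x(\delta^+(u))=1,\ \nabla x_v=0\ \forall v\in V\setminus\{u\}\}$, let $f(\delta):=\inf_{x\in\mathcal{D}}\big(c^\top x-\delta(1-\sum_{e\in\delta^-(u)}\gamma_ex_e)\big)$, and consider the problem (F$_u$): $\inf\ c^\top x/(1-\sum_{e\in\delta^-(u)}\gamma_ex_e)$ subject to $1-\sum_{e\in\delta^-(u)}\gamma_ex_e>0$, $x\in\mathcal{D}$. Let $x$ be a feasible solution to (F$_u$) and $\bar\delta:=c^\top x/(1-\sum_{e\in\delta^-(u)}\gamma_ex_e)$. If either $f(\bar\delta)=-\infty$, or $f(\bar\delta)=c^\top\bar x-\bar\delta(1-\sum_{e\in\delta^-(u)}\gamma_e\bar x_e)<0$ for some $\bar x\in\mathcal{D}$ with $1-\sum_{e\in\delta^-(u)}\gamma_e\bar x_e\le0$, then the optimal value of (F$_u$) is $-\infty$.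
   Context: $\delta^+(v)$, $\delta^-(v)$ are the sets of arcs leaving/entering $v$; $x(F):=\sum_{e\in F}x_e$; the net flow at $v$ is $\nabla x_v:=\sum_{e\in\delta^+(v)}x_e-\sum_{e\in\delta^-(v)}\gamma_ex_e$. *)

theory Defs
  imports "HOL-Analysis.Analysis"
begin

text \<open>A directed multigraph: vertex set V, arc set E, each arc e goes from
  tail tail e to head head e. Flows are real functions on arcs (values off E are irrelevant).\<close>

definition dmultigraph :: "'v set \<Rightarrow> 'e set \<Rightarrow> ('e \<Rightarrow> 'v) \<Rightarrow> ('e \<Rightarrow> 'v) \<Rightarrow> bool" where
  "dmultigraph V E tail head \<longleftrightarrow> finite V \<and> finite E \<and> (\<forall>e\<in>E. tail e \<in> V \<and> head e \<in> V)"

definition out_arcs :: "'e set \<Rightarrow> ('e \<Rightarrow> 'v) \<Rightarrow> 'v \<Rightarrow> 'e set" where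
  "out_arcs E tail v = {e\<in>E. tail e = v}"

definition in_arcs :: "'e set \<Rightarrow> ('e \<Rightarrow> 'v) \<Rightarrow> 'v \<Rightarrow> 'e set" where
  "in_arcs E head v = {e\<in>E. head e = v}"

definition net_flow :: "'e set \<Rightarrow> ('e \<Rightarrow> 'v) \<Rightarrow> ('e \<Rightarrow> 'v) \<Rightarrow> ('e \<Rightarrow> real) \<Rightarrow> ('e \<Rightarrow> real) \<Rightarrow> 'v \<Rightarrow> real" where
  "net_flow E tail head \<gamma> x v = (\<Sum>e\<in>out_arcs E tail v. x e) - (\<Sum>e\<in>in_arcs E head v. \<gamma> e * x e)"

definition flowD :: "'v set \<Rightarrow> 'e set \<Rightarrow> ('e \<Rightarrow> 'v) \<Rightarrow> ('e \<Rightarrow> 'v) \<Rightarrow> ('e \<Rightarrow> real) \<Rightarrow> 'v \<Rightarrow> ('e \<Rightarrow> real) set" where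
  "flowD V E tail head \<gamma> u = {x. (\<forall>e\<in>E. 0 \<le> x e) \<and> (\<Sum>e\<in>out_arcs E tail u. x e) = 1
       \<and> (\<forall>v\<in>V - {u}. net_flow E tail head \<gamma> x v = 0)}"

definition cost :: "'e set \<Rightarrow> ('e \<Rightarrow> real) \<Rightarrow> ('e \<Rightarrow> real) \<Rightarrow> real" where
  "cost E c x = (\<Sum>e\<in>E. c e * x e)"

definition denom :: "'e set \<Rightarrow> ('e \<Rightarrow> 'v) \<Rightarrow> ('e \<Rightarrow> real) \<Rightarrow> 'v \<Rightarrow> ('e \<Rightarrow> real) \<Rightarrow> real" where
  "denom E head \<gamma> u x = 1 - (\<Sum>e\<in>in_arcs E head u. \<gamma> e * x e)"

definition fparam :: "'v set \<Rightarrow> 'e set \<Rightarrow> ('e \<Rightarrow> 'v) \<Rightarrow> ('e \<Rightarrow> 'v) \<Rightarrow> ('e \<Rightarrow> real) \<Rightarrow> ('e \<Rightarrow> real) \<Rightarrow> 'v \<Rightarrow> real \<Rightarrow> ereal" where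
  "fparam V E tail head c \<gamma> u \<delta> =
     (INF x\<in>flowD V E tail head \<gamma> u. ereal (cost E c x - \<delta> * denom E head \<gamma> u x))"

definition feasF :: "'v set \<Rightarrow> 'e set \<Rightarrow> ('e \<Rightarrow> 'v) \<Rightarrow> ('e \<Rightarrow> 'v) \<Rightarrow> ('e \<Rightarrow> real) \<Rightarrow> 'v \<Rightarrow> ('e \<Rightarrow> real) set" where
  "feasF V E tail head \<gamma> u = {x\<in>flowD V E tail head \<gamma> u. denom E head \<gamma> u x > 0}"

definition optF :: "'v set \<Rightarrow> 'e set \<Rightarrow> ('e \<Rightarrow> 'v) \<Rightarrow> ('e \<Rightarrow> 'v) \<Rightarrow> ('e \<Rightarrow> real) \<Rightarrow> ('e \<Rightarrow> real) \<Rightarrow> 'v \<Rightarrow> ereal" where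
  "optF V E tail head c \<gamma> u =
     (INF x\<in>feasF V E tail head \<gamma> u. ereal (cost E c x / denom E head \<gamma> u x))"

end

theory Submission
  imports Defs
begin

text \<open>Write \<open>D(y) = 1 - \<Sum>\<^sub>e\<^sub>\<in>\<^sub>\<delta>\<^sub>-\<^sub>(\<^sub>u\<^sub>) \<gamma>\<^sub>e y\<^sub>e\<close> for the denominator and \<open>g(y) = c\<^sup>Ty - \<delta> D(y)\<close>, so
  that the ratio of a feasible \<open>y\<close> is \<open>\<delta> + g(y) / D(y)\<close>. Both are affine, the flow set is convex,
  and \<open>g(x) \<le> 0\<close> for the given feasible \<open>x\<close>. If some flow \<open>x'\<close> has \<open>D(x') \<le> 0\<close> and \<open>g(x') < 0\<close>,
  then on the segment from \<open>x\<close> to \<open>x'\<close> the denominator takes every small positive value while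
  \<open>g\<close> stays below a fixed negative number, so the ratio is unbounded below. If \<open>f(\<delta>) = -\<infinity>\<close>,
  there are flows with arbitrarily negative \<open>g\<close>: those with \<open>D \<le> 0\<close> are handled by the segment
  argument, and those with \<open>D > 0\<close> have \<open>D \<le> 1\<close> (as \<open>\<gamma> \<ge> 0\<close>), hence ratio at most \<open>\<delta> + g\<close>.\<close>

lemma INF_ereal_eq_minf_iff:
  "(INF x\<in>A. ereal (f x)) = -\<infinity> \<longleftrightarrow> (\<forall>M. \<exists>x\<in>A. f x < M)"
proof
  assume "(INF x\<in>A. ereal (f x)) = -\<infinity>"
  then have "(INF x\<in>A. ereal (f x)) < ereal M" for M
    by simp
  then show "\<forall>M. \<exists>x\<in>A. f x < M"
    by (simp add: INF_less_iff)
next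
  assume below: "\<forall>M. \<exists>x\<in>A. f x < M"
  have "(INF x\<in>A. ereal (f x)) \<le> ereal M" for M
  proof -
    obtain x where "x \<in> A" "f x < M"
      using below by blast
    then show ?thesis
      by (intro INF_lower2[of x]) auto
  qed
  then show "(INF x\<in>A. ereal (f x)) = -\<infinity>"
    by (rule ereal_bot)
qed

definition flow_mix :: "real \<Rightarrow> ('e \<Rightarrow> real) \<Rightarrow> ('e \<Rightarrow> real) \<Rightarrow> 'e \<Rightarrow> real" where
  "flow_mix t x y = (\<lambda>e. (1 - t) * x e + t * y e)"

lemma cost_flow_mix:
  "cost E c (flow_mix t x y) = (1 - t) * cost E c x + t * cost E c y"
proof -
  have "c e * flow_mix t x y e = (1 - t) * (c e * x e) + t * (c e * y e)" for e
    unfolding flow_mix_def by (simp add: algebra_simps)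
  then show ?thesis
    unfolding cost_def by (simp add: sum.distrib sum_distrib_left)
qed

lemma denom_flow_mix:
  "denom E head \<gamma> u (flow_mix t x y) = (1 - t) * denom E head \<gamma> u x + t * denom E head \<gamma> u y"
  unfolding denom_def flow_mix_def
  by (simp add: algebra_simps sum.distrib sum_distrib_left sum_subtractf)

lemma net_flow_flow_mix:
  "net_flow E tail head \<gamma> (flow_mix t x y) v
     = (1 - t) * net_flow E tail head \<gamma> x v + t * net_flow E tail head \<gamma> y v"
  unfolding net_flow_def flow_mix_def
  by (simp add: algebra_simps sum.distrib sum_distrib_left sum_subtractf)

lemma flow_mix_in_flowD:
  assumes "x \<in> flowD V E tail head \<gamma> u" "y \<in> flowD V E tail head \<gamma> u" "0 \<le> t" "t \<le> 1"
  shows "flow_mix t x y \<in> flowD V E tail head \<gamma> u"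
proof -
  have "(\<Sum>e\<in>out_arcs E tail u. flow_mix t x y e)
      = (1 - t) * (\<Sum>e\<in>out_arcs E tail u. x e) + t * (\<Sum>e\<in>out_arcs E tail u. y e)"
    unfolding flow_mix_def by (simp add: sum.distrib sum_distrib_left)
  moreover have "0 \<le> flow_mix t x y e" if "0 \<le> x e" "0 \<le> y e" for e
    using that assms(3,4) unfolding flow_mix_def by simp
  ultimately show ?thesis
    using assms(1,2) unfolding flowD_def by (auto simp: net_flow_flow_mix)
qed

lemma denom_le_1:
  assumes "\<forall>e\<in>E. 0 \<le> \<gamma> e" "y \<in> flowD V E tail head \<gamma> u"
  shows "denom E head \<gamma> u y \<le> 1"
proof -
  have "0 \<le> (\<Sum>e\<in>in_arcs E head u. \<gamma> e * y e)"
    using assms unfolding flowD_def in_arcs_def by (auto intro!: sum_nonneg)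
  then show ?thesis
    unfolding denom_def by simp
qed

lemma flowD_small_denom_negative_gap:
  assumes x: "x \<in> flowD V E tail head \<gamma> u" "0 < denom E head \<gamma> u x"
      "cost E c x \<le> \<delta> * denom E head \<gamma> u x"
    and x': "x' \<in> flowD V E tail head \<gamma> u" "denom E head \<gamma> u x' \<le> 0"
      "cost E c x' < \<delta> * denom E head \<gamma> u x'"
  shows "\<exists>m>0. \<forall>\<epsilon>. 0 < \<epsilon> \<and> \<epsilon> \<le> denom E head \<gamma> u x / 2 \<longrightarrow>
           (\<exists>y\<in>flowD V E tail head \<gamma> u. denom E head \<gamma> u y = \<epsilon> \<and> cost E c y - \<delta> * \<epsilon> \<le> - m)"
proof -
  define a where "a = denom E head \<gamma> u x"
  define k where "k = a - denom E head \<gamma> u x'"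
  define g where "g = cost E c x' - \<delta> * denom E head \<gamma> u x'"
  define m where "m = - (a / (2 * k) * g)"
  have "0 < a" "0 < k" "a \<le> k" "g < 0"
    using x x' unfolding a_def k_def g_def by auto
  have "0 < m"
  proof -
    have "0 < a / (2 * k)"
      using \<open>0 < a\<close> \<open>0 < k\<close> by simp
    then show ?thesis
      using mult_pos_neg[of "a / (2 * k)" g] \<open>g < 0\<close> unfolding m_def by linarith
  qed
  moreover have "\<exists>y\<in>flowD V E tail head \<gamma> u. denom E head \<gamma> u y = \<epsilon> \<and> cost E c y - \<delta> * \<epsilon> \<le> - m"
    if "0 < \<epsilon> \<and> \<epsilon> \<le> a / 2" for \<epsilon>
  proof -
    define t where "t = (a - \<epsilon>) / k"
    have "0 \<le> t" "t \<le> 1"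
      using that \<open>0 < k\<close> \<open>a \<le> k\<close> unfolding t_def by (auto simp: field_simps)
    have "a / (2 * k) \<le> t"
      using that \<open>0 < k\<close> unfolding t_def by (auto simp: field_simps)
    define y where "y = flow_mix t x x'"
    have "y \<in> flowD V E tail head \<gamma> u"
      unfolding y_def using flow_mix_in_flowD[OF x(1) x'(1) \<open>0 \<le> t\<close> \<open>t \<le> 1\<close>] .
    moreover have "denom E head \<gamma> u y = \<epsilon>"
    proof -
      have "denom E head \<gamma> u y = a - t * k"
        unfolding y_def denom_flow_mix a_def k_def by (simp add: algebra_simps)
      then show ?thesis
        using \<open>0 < k\<close> by (simp add: t_def)
    qed
    moreover have "cost E c y - \<delta> * \<epsilon> = (1 - t) * (cost E c x - \<delta> * a) + t * g"
      unfolding \<open>denom E head \<gamma> u y = \<epsilon>\<close>[symmetric] y_def cost_flow_mix denom_flow_mix a_def g_def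
      by (simp add: algebra_simps)
    moreover have "(1 - t) * (cost E c x - \<delta> * a) \<le> 0"
      using x(3) \<open>t \<le> 1\<close> unfolding a_def by (simp add: mult_nonneg_nonpos)
    moreover have "t * g \<le> - m"
      using mult_right_mono_neg[OF \<open>a / (2 * k) \<le> t\<close>, of g] \<open>g < 0\<close> unfolding m_def by simp
    ultimately show ?thesis
      by auto
  qed
  ultimately show ?thesis
    unfolding a_def[symmetric] by blast
qed

lemma feasF_ratio_unbounded_through_nonpositive_denom:
  assumes x: "x \<in> feasF V E tail head \<gamma> u" "cost E c x \<le> \<delta> * denom E head \<gamma> u x"
    and x': "x' \<in> flowD V E tail head \<gamma> u" "denom E head \<gamma> u x' \<le> 0"
      "cost E c x' < \<delta> * denom E head \<gamma> u x'"
  shows "\<exists>y\<in>feasF V E tail head \<gamma> u. cost E c y / denom E head \<gamma> u y < M"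
proof -
  have x_flow: "x \<in> flowD V E tail head \<gamma> u" "0 < denom E head \<gamma> u x"
    using x(1) unfolding feasF_def by auto
  obtain m where "0 < m" and small: "\<forall>\<epsilon>. 0 < \<epsilon> \<and> \<epsilon> \<le> denom E head \<gamma> u x / 2 \<longrightarrow>
      (\<exists>y\<in>flowD V E tail head \<gamma> u. denom E head \<gamma> u y = \<epsilon> \<and> cost E c y - \<delta> * \<epsilon> \<le> - m)"
    using flowD_small_denom_negative_gap[OF x_flow x(2) x'] by blast
  define \<epsilon> where "\<epsilon> = min (denom E head \<gamma> u x / 2) (m / (\<bar>\<delta> - M\<bar> + 1))"
  have "0 < \<epsilon>"
    using x_flow(2) \<open>0 < m\<close> unfolding \<epsilon>_def by simp
  moreover have "\<epsilon> \<le> denom E head \<gamma> u x / 2"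
    unfolding \<epsilon>_def by (rule min.cobounded1)
  ultimately obtain y where y: "y \<in> flowD V E tail head \<gamma> u" "denom E head \<gamma> u y = \<epsilon>"
      "cost E c y - \<delta> * \<epsilon> \<le> - m"
    using small by blast
  have "\<epsilon> \<le> m / (\<bar>\<delta> - M\<bar> + 1)"
    unfolding \<epsilon>_def by (rule min.cobounded2)
  then have "\<bar>\<delta> - M\<bar> + 1 \<le> m / \<epsilon>"
    using \<open>0 < \<epsilon>\<close> by (simp add: pos_le_divide_eq mult.commute)
  have "cost E c y / denom E head \<gamma> u y = \<delta> + (cost E c y - \<delta> * \<epsilon>) / \<epsilon>"
    using y(2) \<open>0 < \<epsilon>\<close> by (simp add: field_simps)
  also have "\<dots> \<le> \<delta> - m / \<epsilon>"
    using divide_right_mono[OF y(3), of \<epsilon>] \<open>0 < \<epsilon>\<close> by simp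
  also have "\<dots> < M"
    using \<open>\<bar>\<delta> - M\<bar> + 1 \<le> m / \<epsilon>\<close> by linarith
  finally have "cost E c y / denom E head \<gamma> u y < M" .
  moreover have "y \<in> feasF V E tail head \<gamma> u"
    using y(1,2) \<open>0 < \<epsilon>\<close> unfolding feasF_def by simp
  ultimately show ?thesis
    by blast
qed

lemma feasF_ratio_unbounded_if_fparam_minf:
  assumes \<gamma>: "\<forall>e\<in>E. 0 \<le> \<gamma> e"
    and x: "x \<in> feasF V E tail head \<gamma> u" "cost E c x \<le> \<delta> * denom E head \<gamma> u x"
    and f: "fparam V E tail head c \<gamma> u \<delta> = -\<infinity>"
  shows "\<exists>y\<in>feasF V E tail head \<gamma> u. cost E c y / denom E head \<gamma> u y < M"
proof -
  obtain y where y: "y \<in> flowD V E tail head \<gamma> u"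
    and gap: "cost E c y - \<delta> * denom E head \<gamma> u y < min 0 (M - \<delta>)"
    using f unfolding fparam_def INF_ereal_eq_minf_iff by blast
  show ?thesis
  proof (cases "0 < denom E head \<gamma> u y")
    case True
    define d where "d = denom E head \<gamma> u y"
    define g where "g = cost E c y - \<delta> * d"
    have "0 < d" "d \<le> 1" "g < 0" "g < M - \<delta>"
      using True denom_le_1[OF \<gamma> y] gap unfolding d_def g_def by auto
    have "g / d \<le> g"
      using mult_left_mono_neg[OF \<open>d \<le> 1\<close>, of g] \<open>g < 0\<close> \<open>0 < d\<close>
      by (simp add: pos_divide_le_eq)
    moreover have "cost E c y / d = \<delta> + g / d"
      using \<open>0 < d\<close> unfolding g_def by (simp add: field_simps)
    ultimately have "cost E c y / denom E head \<gamma> u y < M"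
      using \<open>g < M - \<delta>\<close> unfolding d_def by linarith
    moreover have "y \<in> feasF V E tail head \<gamma> u"
      using y True unfolding feasF_def by simp
    ultimately show ?thesis
      by blast
  next
    case False
    then show ?thesis
      using gap by (intro feasF_ratio_unbounded_through_nonpositive_denom[OF x y]) auto
  qed
qed

theorem lemma4p4:
  fixes V :: "'v set" and E :: "'e set" and tail head :: "'e \<Rightarrow> 'v"
    and c \<gamma> x :: "'e \<Rightarrow> real" and u :: 'v and \<delta> :: real
  assumes G: "dmultigraph V E tail head"
    and gam: "\<forall>e\<in>E. \<gamma> e > 0"
    and uV: "u \<in> V"
    and xfeas: "x \<in> feasF V E tail head \<gamma> u"
    and dl: "\<delta> = cost E c x / denom E head \<gamma> u x"
    and cond: "fparam V E tail head c \<gamma> u \<delta> = -\<infinity> \<or>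
       (\<exists>xb\<in>flowD V E tail head \<gamma> u. denom E head \<gamma> u xb \<le> 0 \<and>
          fparam V E tail head c \<gamma> u \<delta> = ereal (cost E c xb - \<delta> * denom E head \<gamma> u xb) \<and>
          cost E c xb - \<delta> * denom E head \<gamma> u xb < 0)"
  shows "optF V E tail head c \<gamma> u = -\<infinity>"
proof -
  have "0 < denom E head \<gamma> u x"
    using xfeas unfolding feasF_def by simp
  then have x_ratio: "cost E c x \<le> \<delta> * denom E head \<gamma> u x"
    unfolding dl by simp
  have \<gamma>: "\<forall>e\<in>E. 0 \<le> \<gamma> e"
    using gam by (simp add: less_imp_le)
  have "\<exists>y\<in>feasF V E tail head \<gamma> u. cost E c y / denom E head \<gamma> u y < M" for M
    using cond
  proof
    assume "fparam V E tail head c \<gamma> u \<delta> = -\<infinity>"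
    then show ?thesis
      by (rule feasF_ratio_unbounded_if_fparam_minf[OF \<gamma> xfeas x_ratio])
  next
    assume "\<exists>xb\<in>flowD V E tail head \<gamma> u. denom E head \<gamma> u xb \<le> 0 \<and>
          fparam V E tail head c \<gamma> u \<delta> = ereal (cost E c xb - \<delta> * denom E head \<gamma> u xb) \<and>
          cost E c xb - \<delta> * denom E head \<gamma> u xb < 0"
    then obtain x' where "x' \<in> flowD V E tail head \<gamma> u" "denom E head \<gamma> u x' \<le> 0"
        "cost E c x' - \<delta> * denom E head \<gamma> u x' < 0"
      by blast
    then show ?thesis
      by (intro feasF_ratio_unbounded_through_nonpositive_denom[OF xfeas x_ratio]) simp_all
  qed
  then show ?thesis
    unfolding optF_def INF_ereal_eq_minf_iff by blast
qed

end
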